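(* Let $R$ be an $n\times n$ irreducible nonnegative matrix with positive left and right eigenvectors $u$ and $v$ for the PF eigenvalue $1$. Then for every positive integer $k$, \[ \phi(R^k)\le k\cdot\phi(R). \]
   Context: For a nonnegative matrix $M$ with $Mv=v$ and $M^Tu=u$ (this holds for $M=R^k$), define $\phi_S(M)=\langle\mathbf 1_S,D_uMD_v\mathbf 1_{\overline S}\rangle/\langle\mathbf 1_S,D_uMD_v\mathbf 1\rangle$ and $\phi(M)=\min\phi_S(M)$ over nonempty $S\subseteq[n]$ with $\sum_{i\in S}u_iv_i\le\frac12\sum_iu_iv_i$; here $D_x$ is the diagonal matrix with $x$ on its diagonal and $\mathbf 1_S$ the indicator vector of $S$. *)

theory Defs
  imports "HOL-Analysis.Analysis"
begin

primrec matpow :: "real^'n^'n \<Rightarrow> nat \<Rightarrow> real^'n^'n" where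
  "matpow A 0 = mat 1"
| "matpow A (Suc m) = matpow A m ** A"

definition nonneg_matrix :: "real^'n^'n \<Rightarrow> bool" where
  "nonneg_matrix A \<longleftrightarrow> (\<forall>i j. A $ i $ j \<ge> 0)"

text \<open>Irreducible: the directed graph with an edge i -> j iff A i j > 0 is strongly
  connected, i.e. for all i j there is a path of positive length from i to j.\<close>
definition irreducible_matrix :: "real^'n^'n \<Rightarrow> bool" where
  "irreducible_matrix A \<longleftrightarrow> (\<forall>i j. \<exists>k>0. matpow A k $ i $ j > 0)"

definition phi_set :: "real^'n^'n \<Rightarrow> real^'n \<Rightarrow> real^'n \<Rightarrow> 'n set \<Rightarrow> real" where
  "phi_set M u v S =
     (\<Sum>i\<in>S. \<Sum>j\<in>- S. u $ i * M $ i $ j * v $ j) /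
     (\<Sum>i\<in>S. \<Sum>j\<in>UNIV. u $ i * M $ i $ j * v $ j)"

definition admissible_sets :: "real^'n \<Rightarrow> real^'n \<Rightarrow> 'n set set" where
  "admissible_sets u v =
     {S. S \<noteq> {} \<and> (\<Sum>i\<in>S. u $ i * v $ i) \<le> (\<Sum>i\<in>UNIV. u $ i * v $ i) / 2}"

definition phi :: "real^'n^'n \<Rightarrow> real^'n \<Rightarrow> real^'n \<Rightarrow> real" where
  "phi M u v = Min (phi_set M u v ` admissible_sets u v)"

end

theory Submission
  imports Defs
begin

text \<open>
  Since \<open>R\<^sup>k v = v\<close>, the denominator of \<open>\<phi>\<^sub>S(R\<^sup>k)\<close> is \<open>\<Sum>\<^sub>i\<^sub>\<in>\<^sub>S u\<^sub>i v\<^sub>i\<close> for every \<open>k\<close>, so only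
  the numerators, the weights of the cut \<open>(S, -S)\<close>, need comparing. Writing
  \<open>(AB)\<^sub>i\<^sub>j = \<Sum>\<^sub>l A\<^sub>i\<^sub>l B\<^sub>l\<^sub>j\<close>, a two-step path from \<open>S\<close> to \<open>-S\<close> crosses the cut either in
  its \<open>A\<close>-step (\<open>l \<notin> S\<close>) or in its \<open>B\<close>-step (\<open>l \<in> S\<close>); summing out the free end with
  \<open>B v = v\<close> resp. \<open>u\<^sup>T A = u\<^sup>T\<close> bounds the cut weight of \<open>AB\<close> by the sum of those of
  \<open>A\<close> and \<open>B\<close>. Induction on \<open>k\<close> and evaluation at a set attaining \<open>\<phi>(R)\<close> give the claim.
\<close>

definition cut_weight :: "real^'n^'n \<Rightarrow> real^'n \<Rightarrow> real^'n \<Rightarrow> 'n set \<Rightarrow> real" where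
  "cut_weight M u v S = (\<Sum>i\<in>S. \<Sum>j\<in>- S. u $ i * M $ i $ j * v $ j)"

lemma nonneg_matrix_matpow: "nonneg_matrix R \<Longrightarrow> nonneg_matrix (matpow R k)"
  by (induction k)
    (auto simp: nonneg_matrix_def mat_def matrix_matrix_mult_def intro!: sum_nonneg)

lemma matpow_mult_fixed_vector: "R *v v = v \<Longrightarrow> matpow R k *v v = v"
  by (induction k) (simp_all add: matrix_vector_mul_lid flip: matrix_vector_mul_assoc)

lemma transpose_matpow_mult_fixed_vector:
  "transpose R *v u = u \<Longrightarrow> transpose (matpow R k) *v u = u"
  by (induction k)
    (simp_all add: transpose_mat matrix_vector_mul_lid matrix_transpose_mul
      flip: matrix_vector_mul_assoc)

lemma row_sum_eq_if_mult_fixed: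
  fixes M :: "real^'n^'n"
  assumes "M *v v = v"
  shows "(\<Sum>j\<in>UNIV. M $ i $ j * v $ j) = v $ i"
  using arg_cong[OF assms, of "\<lambda>x. x $ i"] by (simp add: matrix_vector_mult_def)

lemma column_sum_eq_if_transpose_mult_fixed:
  fixes M :: "real^'n^'n"
  assumes "transpose M *v u = u"
  shows "(\<Sum>i\<in>UNIV. u $ i * M $ i $ j) = u $ j"
  using arg_cong[OF assms, of "\<lambda>x. x $ j"]
  by (simp add: matrix_vector_mult_def transpose_def mult.commute)

lemma cut_weight_mult_le:
  fixes A B :: "real^'n^'n" and u v :: "real^'n"
  assumes A: "nonneg_matrix A" and B: "nonneg_matrix B"
    and u: "\<forall>i. u $ i \<ge> 0" and v: "\<forall>i. v $ i \<ge> 0"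
    and uA: "transpose A *v u = u" and Bv: "B *v v = v"
  shows "cut_weight (A ** B) u v S \<le> cut_weight A u v S + cut_weight B u v S"
proof -
  define g where "g i l j = u $ i * A $ i $ l * B $ l $ j * v $ j" for i l j
  have g_nonneg: "g i l j \<ge> 0" for i l j
    using A B u v by (simp add: g_def nonneg_matrix_def)
  have "u $ i * (A ** B) $ i $ j * v $ j = (\<Sum>l\<in>S. g i l j) + (\<Sum>l\<in>-S. g i l j)" for i j
    by (simp add: matrix_matrix_mult_def g_def sum_distrib_left sum_distrib_right mult.assoc
        flip: sum.union_disjoint[of S "-S", simplified Compl_partition])
  then have split: "cut_weight (A ** B) u v S =
      (\<Sum>i\<in>S. \<Sum>j\<in>-S. \<Sum>l\<in>S. g i l j) + (\<Sum>i\<in>S. \<Sum>j\<in>-S. \<Sum>l\<in>-S. g i l j)"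
    by (simp add: cut_weight_def sum.distrib)
  have crossing_in_B: "(\<Sum>i\<in>S. \<Sum>j\<in>-S. \<Sum>l\<in>S. g i l j) \<le> cut_weight B u v S"
  proof -
    have "(\<Sum>i\<in>S. \<Sum>j\<in>-S. \<Sum>l\<in>S. g i l j) \<le> (\<Sum>i\<in>UNIV. \<Sum>j\<in>-S. \<Sum>l\<in>S. g i l j)"
      by (intro sum_mono2) (auto intro!: sum_nonneg g_nonneg)
    also have "\<dots> = (\<Sum>l\<in>S. \<Sum>j\<in>-S. (\<Sum>i\<in>UNIV. u $ i * A $ i $ l) * B $ l $ j * v $ j)"
      by (simp add: g_def sum_distrib_right sum.swap[of _ UNIV] sum.swap[of _ "-S" S])
    also have "\<dots> = cut_weight B u v S"
      by (simp add: cut_weight_def column_sum_eq_if_transpose_mult_fixed[OF uA])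
    finally show ?thesis .
  qed
  have crossing_in_A: "(\<Sum>i\<in>S. \<Sum>j\<in>-S. \<Sum>l\<in>-S. g i l j) \<le> cut_weight A u v S"
  proof -
    have "(\<Sum>i\<in>S. \<Sum>j\<in>-S. \<Sum>l\<in>-S. g i l j) \<le> (\<Sum>i\<in>S. \<Sum>j\<in>UNIV. \<Sum>l\<in>-S. g i l j)"
      by (intro sum_mono sum_mono2) (auto intro!: sum_nonneg g_nonneg)
    also have "\<dots> = (\<Sum>i\<in>S. \<Sum>l\<in>-S. u $ i * A $ i $ l * (\<Sum>j\<in>UNIV. B $ l $ j * v $ j))"
      by (simp add: g_def sum_distrib_left mult.assoc sum.swap[of _ UNIV])
    also have "\<dots> = cut_weight A u v S"
      by (simp add: cut_weight_def row_sum_eq_if_mult_fixed[OF Bv])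
    finally show ?thesis .
  qed
  show ?thesis
    using split crossing_in_A crossing_in_B by linarith
qed

lemma cut_weight_mat_1: "cut_weight (mat 1) u v S = 0"
  by (auto simp: cut_weight_def mat_def intro!: sum.neutral)

lemma cut_weight_matpow_le:
  fixes R :: "real^'n^'n" and u v :: "real^'n"
  assumes R: "nonneg_matrix R" and u: "\<forall>i. u $ i \<ge> 0" and v: "\<forall>i. v $ i \<ge> 0"
    and Rv: "R *v v = v" and uR: "transpose R *v u = u"
  shows "cut_weight (matpow R k) u v S \<le> real k * cut_weight R u v S"
proof (induction k)
  case 0
  then show ?case by (simp add: cut_weight_mat_1)
next
  case (Suc k)
  have "cut_weight (matpow R k ** R) u v S \<le> cut_weight (matpow R k) u v S + cut_weight R u v S"
    by (intro cut_weight_mult_le nonneg_matrix_matpow transpose_matpow_mult_fixed_vector assms)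
  with Suc show ?case by (simp add: algebra_simps)
qed

lemma phi_set_eq_cut_weight_div:
  fixes M :: "real^'n^'n"
  assumes "M *v v = v"
  shows "phi_set M u v S = cut_weight M u v S / (\<Sum>i\<in>S. u $ i * v $ i)"
proof -
  have "(\<Sum>j\<in>UNIV. u $ i * M $ i $ j * v $ j) = u $ i * v $ i" for i
    using row_sum_eq_if_mult_fixed[OF assms, of i] by (simp add: mult.assoc flip: sum_distrib_left)
  then show ?thesis
    by (simp add: phi_set_def cut_weight_def)
qed

lemma admissible_sets_nonempty:
  fixes u v :: "real^'n"
  assumes "CARD('n) \<ge> 2" and u: "\<forall>i. u $ i \<ge> 0" and v: "\<forall>i. v $ i \<ge> 0"
  shows "admissible_sets u v \<noteq> {}"
proof -
  obtain a b :: 'n where "a \<noteq> b"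
    using assms(1) card_le_Suc0_iff_eq[of "UNIV :: 'n set"] by force
  moreover have "u $ a * v $ a + u $ b * v $ b \<le> (\<Sum>i\<in>UNIV. u $ i * v $ i)"
    using sum_mono2[of UNIV "{a, b}" "\<lambda>i. u $ i * v $ i"] \<open>a \<noteq> b\<close> u v by simp
  ultimately have "{a} \<in> admissible_sets u v \<or> {b} \<in> admissible_sets u v"
    by (auto simp: admissible_sets_def)
  then show ?thesis by blast
qed

lemma phi_attained:
  assumes "admissible_sets u v \<noteq> {}"
  obtains S where "S \<in> admissible_sets u v" and "phi M u v = phi_set M u v S"
proof -
  have "phi M u v \<in> phi_set M u v ` admissible_sets u v"
    unfolding phi_def using assms by (intro Min_in) auto
  then show ?thesis
    using that by blast
qed

lemma phi_le_phi_set: "S \<in> admissible_sets u v \<Longrightarrow> phi M u v \<le> phi_set M u v S"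
  by (simp add: phi_def)

theorem lemma3p13:
  fixes R :: "real^'n^'n" and u v :: "real^'n" and k :: nat
  assumes "CARD('n) \<ge> 2"
    and "nonneg_matrix R"
    and "irreducible_matrix R"
    and "\<forall>i. u $ i > 0" and "\<forall>i. v $ i > 0"
    and "R *v v = v" and "transpose R *v u = u"
    and "k \<ge> 1"
  shows "phi (matpow R k) u v \<le> real k * phi R u v"
proof -
  have u: "\<forall>i. u $ i \<ge> 0" and v: "\<forall>i. v $ i \<ge> 0"
    using assms(4,5) by (simp_all add: less_imp_le)
  obtain S where S: "S \<in> admissible_sets u v" and phi_R: "phi R u v = phi_set R u v S"
    using phi_attained admissible_sets_nonempty[OF assms(1) u v] by metis
  have "(\<Sum>i\<in>S. u $ i * v $ i) > 0"
    using S assms(4,5) by (intro sum_pos) (auto simp: admissible_sets_def)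
  then have "cut_weight (matpow R k) u v S / (\<Sum>i\<in>S. u $ i * v $ i)
      \<le> real k * cut_weight R u v S / (\<Sum>i\<in>S. u $ i * v $ i)"
    by (intro divide_right_mono cut_weight_matpow_le assms(2,6,7) u v) simp
  then have "phi_set (matpow R k) u v S \<le> real k * phi_set R u v S"
    by (simp add: phi_set_eq_cut_weight_div assms(6) matpow_mult_fixed_vector)
  then show ?thesis
    using phi_le_phi_set[OF S, of "matpow R k"] unfolding phi_R by linarith
qed

end
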